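(* For all integers $0\le k\le n$, the number of directed paths in $\Gamma$ from the node $(k,0)$ to the node $(n,n)$ is $$\pi(n,n,k)=\binom{n}{k}E_{n-k}.$$
   Context: Let $\Gamma$ be the directed graph whose nodes are the pairs $(n,k)$ of integers with $n\ge k\ge 0$, and whose edges are, for all $n\ge k\ge 0$: $(n+1,k)\to(n+1,k+1)$ and $(n,n-k)\to(n+1,k+1)$. $\pi(n,k,i)$ denotes the number of directed paths in $\Gamma$ from $(i,0)$ to $(n,k)$, where the trivial path counts when $(i,0)=(n,k)$. A permutation $\sigma_1\cdots\sigma_n$ of $\{1,\ldots,n\}$ is down-up if $\sigma_1>\sigma_2<\sigma_3>\cdots$; $E_n$ is the number of such permutations, with $E_0=E_1=1$. *)

theory Defs
  imports Main
begin

definition gnode :: "nat \<times> nat \<Rightarrow> bool" where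
  "gnode v \<longleftrightarrow> snd v \<le> fst v"

definition gedge :: "nat \<times> nat \<Rightarrow> nat \<times> nat \<Rightarrow> bool" where
  "gedge u v \<longleftrightarrow>
     (\<exists>n k. k \<le> n \<and> u = (n+1, k) \<and> v = (n+1, k+1)) \<or>
     (\<exists>n k. k \<le> n \<and> u = (n, n-k) \<and> v = (n+1, k+1))"

definition gpath :: "(nat \<times> nat) list \<Rightarrow> bool" where
  "gpath p \<longleftrightarrow> p \<noteq> [] \<and> (\<forall>v\<in>set p. gnode v) \<and>
     (\<forall>j. Suc j < length p \<longrightarrow> gedge (p ! j) (p ! Suc j))"

text \<open>pi(n,k,i): number of directed paths from (i,0) to (n,k) (trivial path included).\<close>
definition npaths :: "nat \<Rightarrow> nat \<Rightarrow> nat \<Rightarrow> nat" where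
  "npaths n k i = card {p. gpath p \<and> hd p = (i,0) \<and> last p = (n,k)}"

definition down_up :: "nat list \<Rightarrow> bool" where
  "down_up xs \<longleftrightarrow> (\<forall>j. Suc j < length xs \<longrightarrow>
      (if even j then xs ! j > xs ! Suc j else xs ! j < xs ! Suc j))"

definition euler_E :: "nat \<Rightarrow> nat" where
  "euler_E n = card {xs. distinct xs \<and> set xs = {1..n} \<and> down_up xs}"

end

theory Submission
  imports Defs
begin

(* Reading off the in-edges of (n+1,k+1) gives the recursion
   pi(n+1,k+1,i) = pi(n+1,k,i) + pi(n,n-k,i), with pi(n,0,i) = [n = i].
   Started at i = 0 this is the Seidel-Entringer triangle: pi(n,k,0) counts the down-up
   permutations of an (n+1)-set that begin with its (k+1)-st smallest element, since
   removing the first element leaves an up-down permutation beginning with a smaller one;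
   summing over the first element gives pi(m,m,0) = E_m.
   For a general start, Pascal's rule applied to both binomials shows that
   sum_a C(k,a) C(n-k,i-a) pi(n-i,k-a,0) satisfies the same recursion and base cases,
   hence equals pi(n,k,i); on the diagonal k = n only the term a = i survives. *)

fun npaths_rec :: "nat \<Rightarrow> nat \<Rightarrow> nat \<Rightarrow> nat" where
  "npaths_rec n 0 i = (if n = i then 1 else 0)"
| "npaths_rec 0 (Suc k) i = 0"
| "npaths_rec (Suc n) (Suc k) i =
     (if k \<le> n then npaths_rec (Suc n) k i + npaths_rec n (n - k) i else 0)"

definition gpaths :: "nat \<times> nat \<Rightarrow> nat \<times> nat \<Rightarrow> (nat \<times> nat) list set" where
  "gpaths u v = {p. gpath p \<and> hd p = u \<and> last p = v}"

lemma gedge_to_iff: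
  "gedge u (n, k) \<longleftrightarrow> 1 \<le> k \<and> k \<le> n \<and> (u = (n, k - 1) \<or> u = (n - 1, n - k))"
  unfolding gedge_def by (cases n; cases k) auto

lemma gpath_iff_successively:
  "gpath p \<longleftrightarrow> p \<noteq> [] \<and> (\<forall>v\<in>set p. gnode v) \<and> successively gedge p"
  by (simp add: gpath_def successively_conv_nth)

lemma gpath_snoc:
  "gpath (q @ [v]) \<longleftrightarrow> gnode v \<and> (q = [] \<or> gpath q \<and> gedge (last q) v)"
  by (auto simp: gpath_iff_successively successively_append_iff)

lemma gpaths_snoc_last: "p \<in> gpaths u v \<Longrightarrow> p = butlast p @ [v]"
  unfolding gpaths_def gpath_def by auto

lemma gpaths_to_column_0: "gpaths (i, 0) (n, 0) = (if n = i then {[(i, 0)]} else {})"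
proof -
  have only_trivial: "p = [(i, 0)] \<and> n = i" if p: "p \<in> gpaths (i, 0) (n, 0)" for p
  proof -
    define q where "q = butlast p"
    have q: "p = q @ [(n, 0)]"
      using gpaths_snoc_last[OF p] by (simp add: q_def)
    then have "q = []"
      using p by (auto simp: gpaths_def gpath_snoc gedge_to_iff)
    then show ?thesis
      using p q by (simp add: gpaths_def)
  qed
  have "[(i, 0)] \<in> gpaths (i, 0) (i, 0)"
    by (simp add: gpaths_def gpath_def gnode_def)
  then show ?thesis
    using only_trivial by (intro set_eqI) (metis empty_iff singleton_iff)
qed

lemma gpaths_to_Suc:
  assumes "k \<le> n"
  shows "gpaths (i, 0) (Suc n, Suc k) =
    (\<lambda>q. q @ [(Suc n, Suc k)]) ` (gpaths (i, 0) (Suc n, k) \<union> gpaths (i, 0) (n, n - k))"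
    (is "?lhs = ?snoc ` ?prev")
proof
  show "?lhs \<subseteq> ?snoc ` ?prev"
  proof
    fix p assume p: "p \<in> ?lhs"
    define q where "q = butlast p"
    have q: "p = ?snoc q"
      using gpaths_snoc_last[OF p] by (simp add: q_def)
    with p have "q \<noteq> []" "gpath q" "gedge (last q) (Suc n, Suc k)" "hd q = (i, 0)"
      by (auto simp: gpaths_def gpath_snoc hd_append split: if_splits)
    then show "p \<in> ?snoc ` ?prev"
      using q by (auto simp: gpaths_def gedge_to_iff)
  qed
  show "?snoc ` ?prev \<subseteq> ?lhs"
  proof
    fix p assume "p \<in> ?snoc ` ?prev"
    then obtain q where q: "p = ?snoc q" "q \<in> ?prev"
      by blast
    then have "q \<noteq> []"
      by (auto simp: gpaths_def gpath_def)
    with q assms show "p \<in> ?lhs"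
      by (auto simp: gpaths_def gpath_snoc gedge_to_iff gnode_def)
  qed
qed

lemma finite_card_gpaths:
  "k \<le> n \<Longrightarrow> finite (gpaths (i, 0) (n, k)) \<and> card (gpaths (i, 0) (n, k)) = npaths_rec n k i"
proof (induction n k i rule: npaths_rec.induct)
  case (1 n i)
  then show ?case
    by (simp add: gpaths_to_column_0)
next
  case (3 n k i)
  have "inj (\<lambda>q. q @ [(Suc n, Suc k)])"
    by (auto intro: injI)
  moreover have "gpaths (i, 0) (Suc n, k) \<inter> gpaths (i, 0) (n, n - k) = {}"
    by (auto simp: gpaths_def)
  ultimately show ?case
    using 3 by (simp add: gpaths_to_Suc card_image inj_on_subset card_Un_disjoint)
qed simp

lemma npaths_eq_npaths_rec: "k \<le> n \<Longrightarrow> npaths n k i = npaths_rec n k i"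
  using finite_card_gpaths by (simp add: npaths_def gpaths_def[symmetric])

abbreviation entringer :: "nat \<Rightarrow> nat \<Rightarrow> nat" where
  "entringer n k \<equiv> npaths_rec n k 0"

lemma npaths_rec_eq_0_if_less: "n < i \<Longrightarrow> npaths_rec n k i = 0"
  by (induction n k i rule: npaths_rec.induct) auto

lemma npaths_rec_start_row: "k \<le> i \<Longrightarrow> npaths_rec i k i = 1"
proof (induction k)
  case (Suc k)
  then obtain n where "i = Suc n"
    by (cases i) auto
  with Suc show ?case
    by (simp add: npaths_rec_eq_0_if_less)
qed simp

lemma entringer_Suc_eq_sum: "k \<le> Suc n \<Longrightarrow> entringer (Suc n) k = (\<Sum>j<k. entringer n (n - j))"
  by (induction k) auto

definition entringer_conv :: "nat \<Rightarrow> nat \<Rightarrow> nat \<Rightarrow> nat" where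
  "entringer_conv n k i =
     (\<Sum>a\<le>i. (k choose a) * ((n - k) choose (i - a)) * entringer (n - i) (k - a))"

lemma entringer_conv_eq_0_if_less:
  assumes "k \<le> n" "n < i"
  shows "entringer_conv n k i = 0"
proof -
  have "(k choose a) * ((n - k) choose (i - a)) = 0" for a
    using assms by (cases "a \<le> k") auto
  then show ?thesis
    by (simp add: entringer_conv_def)
qed

lemma entringer_conv_start_row:
  assumes "k \<le> i"
  shows "entringer_conv i k i = 1"
proof -
  have "(k choose a) * ((i - k) choose (i - a)) * entringer 0 (k - a) = (if a = k then 1 else 0)"
    if "a \<le> i" for a
    using that by (cases "k - a") auto
  then show ?thesis
    using assms by (simp add: entringer_conv_def)
qed

lemma sum_Suc_choose_mult:
  "(\<Sum>a\<le>i. (Suc k choose a) * f a) = (\<Sum>a\<le>i. (k choose a) * f a) + (\<Sum>a<i. (k choose a) * f (Suc a))"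
  by (induction i) (simp_all add: algebra_simps)

lemma sum_mult_Suc_choose:
  "(\<Sum>a\<le>i. f a * (Suc r choose (i - a))) =
     (\<Sum>a\<le>i. f a * (r choose (i - a))) + (\<Sum>a<i. f a * (r choose (i - Suc a)))"
proof -
  have "f a * (Suc r choose (i - a)) = f a * (r choose (i - a)) + f a * (r choose (i - Suc a))"
    if "a < i" for a
  proof -
    from that have "i - a = Suc (i - Suc a)"
      by simp
    then show ?thesis
      by (simp add: algebra_simps)
  qed
  then show ?thesis
    by (simp add: lessThan_Suc_atMost[symmetric] sum.distrib)
qed

lemma entringer_conv_reflect:
  assumes "k \<le> n" "i \<le> n"
  shows "entringer_conv n (n - k) i =
    (\<Sum>a\<le>i. (k choose a) * ((n - k) choose (i - a)) * entringer (n - i) (n - i - (k - a)))"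
proof -
  have "entringer_conv n (n - k) i =
      (\<Sum>a\<le>i. ((n - k) choose a) * (k choose (i - a)) * entringer (n - i) (n - k - a))"
    using assms by (simp add: entringer_conv_def)
  also have "\<dots> = (\<Sum>a\<le>i. ((n - k) choose (i - a)) * (k choose a) * entringer (n - i) (n - k - (i - a)))"
    by (rule sum.reindex_bij_witness[of _ "\<lambda>a. i - a" "\<lambda>a. i - a"]) auto
  also have "\<dots> = (\<Sum>a\<le>i. (k choose a) * ((n - k) choose (i - a)) * entringer (n - i) (n - i - (k - a)))"
    using assms by (intro sum.cong refl) (auto simp: not_le ac_simps)
  finally show ?thesis .
qed

lemma entringer_conv_Suc:
  assumes "k \<le> n" "i \<le> n"
  shows "entringer_conv (Suc n) (Suc k) i = entringer_conv (Suc n) k i + entringer_conv n (n - k) i"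
proof -
  define m where "m = n - i"
  define c where "c a = (k choose a) * ((n - k) choose (i - a))" for a
  define A where "A = (\<Sum>a\<le>i. c a * entringer (Suc m) (k - a))"
  define B where "B = (\<Sum>a<i. (k choose a) * ((n - k) choose (i - Suc a)) * entringer (Suc m) (k - a))"
  have entringer_step:
    "c a * entringer (Suc m) (Suc k - a) = c a * entringer (Suc m) (k - a) + c a * entringer m (m - (k - a))"
    for a
  proof (cases "c a = 0")
    case False
    then have "a \<le> k" "i - a \<le> n - k"
      by (auto simp: c_def)
    then have "Suc k - a = Suc (k - a)" "k - a \<le> m"
      using assms by (auto simp: m_def)
    then show ?thesis
      by (simp add: algebra_simps)
  qed simp
  have "entringer_conv (Suc n) (Suc k) i =
      (\<Sum>a\<le>i. (Suc k choose a) * (((n - k) choose (i - a)) * entringer (Suc m) (Suc k - a)))"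
    using assms by (simp add: entringer_conv_def m_def Suc_diff_le mult.assoc)
  also have "\<dots> = (\<Sum>a\<le>i. c a * entringer (Suc m) (Suc k - a)) + B"
    by (simp add: sum_Suc_choose_mult c_def B_def mult.assoc)
  also have "\<dots> = (A + B) + (\<Sum>a\<le>i. c a * entringer m (m - (k - a)))"
    by (simp add: entringer_step sum.distrib A_def)
  also have "A + B = entringer_conv (Suc n) k i"
    using sum_mult_Suc_choose[of "\<lambda>a. (k choose a) * entringer (Suc m) (k - a)" "n - k" i] assms
    by (simp add: entringer_conv_def A_def B_def c_def m_def Suc_diff_le ac_simps)
  also have "(\<Sum>a\<le>i. c a * entringer m (m - (k - a))) = entringer_conv n (n - k) i"
    using assms by (simp add: entringer_conv_reflect c_def m_def)
  finally show ?thesis .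
qed

lemma npaths_rec_eq_entringer_conv: "k \<le> n \<Longrightarrow> npaths_rec n k i = entringer_conv n k i"
proof (induction n k i rule: npaths_rec.induct)
  case (1 n i)
  have "entringer_conv n 0 i = (\<Sum>a\<le>i. if a = 0 then (n choose i) * entringer (n - i) 0 else 0)"
    unfolding entringer_conv_def by (intro sum.cong refl) auto
  then show ?case
    by simp
next
  case (3 n k i)
  then have "k \<le> n"
    by simp
  then consider "i \<le> n" | "i = Suc n" | "Suc n < i"
    by linarith
  then show ?case
  proof cases
    case 1
    with 3 \<open>k \<le> n\<close> show ?thesis
      by (simp add: entringer_conv_Suc)
  next
    case 2
    with \<open>k \<le> n\<close> show ?thesis
      by (simp add: npaths_rec_start_row entringer_conv_start_row del: npaths_rec.simps)
  next
    case 3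
    with \<open>k \<le> n\<close> show ?thesis
      by (simp add: npaths_rec_eq_0_if_less entringer_conv_eq_0_if_less del: npaths_rec.simps)
  qed
qed simp

lemma npaths_rec_diagonal:
  assumes "i \<le> n"
  shows "npaths_rec n n i = (n choose i) * entringer (n - i) (n - i)"
proof -
  have "entringer_conv n n i = (\<Sum>a\<le>i. if a = i then (n choose i) * entringer (n - i) (n - i) else 0)"
    unfolding entringer_conv_def by (intro sum.cong refl) auto
  then show ?thesis
    using assms by (simp add: npaths_rec_eq_entringer_conv)
qed

definition alternating :: "bool \<Rightarrow> nat list \<Rightarrow> bool" where
  "alternating down xs \<longleftrightarrow> (\<forall>j. Suc j < length xs \<longrightarrow>
      (if even j = down then xs ! Suc j < xs ! j else xs ! j < xs ! Suc j))"

lemma down_up_eq_alternating: "down_up = alternating True"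
  by (simp add: fun_eq_iff down_up_def alternating_def)

lemma alternating_Cons_Cons:
  "alternating down (x # y # ys) \<longleftrightarrow>
     (if down then y < x else x < y) \<and> alternating (\<not> down) (y # ys)"
proof -
  have "alternating down (x # y # ys) \<longleftrightarrow> (\<forall>j < Suc (length ys).
      if even j = down then (x # y # ys) ! Suc j < (x # y # ys) ! j
      else (x # y # ys) ! j < (x # y # ys) ! Suc j)"
    by (simp add: alternating_def)
  also have "\<dots> \<longleftrightarrow> (if down then y < x else x < y) \<and> alternating (\<not> down) (y # ys)"
    unfolding All_less_Suc2 by (auto simp: alternating_def)
  finally show ?thesis .
qed

lemma alternating_singleton: "alternating down [x]"
  by (simp add: alternating_def)

definition alt_perms :: "bool \<Rightarrow> nat set \<Rightarrow> nat \<Rightarrow> nat list set" where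
  "alt_perms down A x = {xs. distinct xs \<and> set xs = A \<and> alternating down xs \<and> hd xs = x}"

lemma finite_alt_perms: "finite A \<Longrightarrow> finite (alt_perms down A x)"
  unfolding alt_perms_def by (rule finite_subset[OF _ finite_subset_distinct]) auto

lemma alt_perms_singleton: "alt_perms down {x} x = {[x]}"
proof -
  have "xs = [x]" if "distinct xs" "set xs = {x}" for xs :: "nat list"
  proof -
    have "length xs = 1"
      using that distinct_card[of xs] by simp
    then show ?thesis
      using that by (cases xs) auto
  qed
  then show ?thesis
    by (auto simp: alt_perms_def alternating_singleton)
qed

lemma alt_perms_Cons:
  assumes "x \<in> A" "A \<noteq> {x}"
  shows "alt_perms down A x = (\<Union>y\<in>{y\<in>A - {x}. if down then y < x else x < y}.
           Cons x ` alt_perms (\<not> down) (A - {x}) y)"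
    (is "?lhs = ?rhs")
proof
  show "?lhs \<subseteq> ?rhs"
  proof
    fix xs assume xs: "xs \<in> ?lhs"
    with assms obtain ys where ys: "xs = x # ys"
      by (cases xs) (auto simp: alt_perms_def)
    moreover from xs ys assms obtain y zs where "ys = y # zs"
      by (cases ys) (auto simp: alt_perms_def)
    ultimately show "xs \<in> ?rhs"
      using xs by (auto simp: alt_perms_def alternating_Cons_Cons)
  qed
  show "?rhs \<subseteq> ?lhs"
  proof
    fix xs assume "xs \<in> ?rhs"
    then obtain y ys where y: "y \<in> A - {x}" "if down then y < x else x < y"
      and ys: "ys \<in> alt_perms (\<not> down) (A - {x}) y" and xs: "xs = x # ys"
      by blast
    from ys y obtain zs where "ys = y # zs"
      by (cases ys) (auto simp: alt_perms_def)
    with xs y ys assms show "xs \<in> ?lhs"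
      by (auto simp: alt_perms_def alternating_Cons_Cons)
  qed
qed

lemma card_alt_perms_Cons:
  assumes "finite A" "x \<in> A" "A \<noteq> {x}"
  shows "card (alt_perms down A x) =
    (\<Sum>y\<in>{y\<in>A - {x}. if down then y < x else x < y}. card (alt_perms (\<not> down) (A - {x}) y))"
proof -
  let ?S = "{y\<in>A - {x}. if down then y < x else x < y}"
  have "card (alt_perms down A x) = (\<Sum>y\<in>?S. card (Cons x ` alt_perms (\<not> down) (A - {x}) y))"
    unfolding alt_perms_Cons[OF assms(2,3)]
    using assms(1) finite_alt_perms by (intro card_UN_disjoint) (auto simp: alt_perms_def)
  also have "\<dots> = (\<Sum>y\<in>?S. card (alt_perms (\<not> down) (A - {x}) y))"
    by (intro sum.cong refl card_image) (auto intro: inj_onI)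
  finally show ?thesis .
qed

definition rank :: "nat set \<Rightarrow> nat \<Rightarrow> nat" where
  "rank B x = card {y\<in>B. y < x}"

lemma rank_mono: "finite B \<Longrightarrow> x \<le> y \<Longrightarrow> rank B x \<le> rank B y"
  unfolding rank_def by (rule card_mono) auto

lemma rank_strict_mono: "finite B \<Longrightarrow> y \<in> B \<Longrightarrow> y < x \<Longrightarrow> rank B y < rank B x"
  unfolding rank_def by (rule psubset_card_mono) auto

lemma rank_less_card: "finite B \<Longrightarrow> y \<in> B \<Longrightarrow> rank B y < card B"
  unfolding rank_def by (rule psubset_card_mono) auto

lemma inj_on_rank: "finite B \<Longrightarrow> inj_on (rank B) B"
  by (rule inj_onI) (metis linorder_neqE_nat rank_strict_mono less_irrefl)

lemma rank_remove: "rank (A - {x}) x = rank A x"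
  unfolding rank_def by (rule arg_cong[where f = card]) auto

lemma sum_rank_reindex:
  assumes "finite B" "S \<subseteq> B" "rank B ` S \<subseteq> J" "finite J" "card J \<le> card S"
  shows "(\<Sum>y\<in>S. f (rank B y)) = (\<Sum>j\<in>J. f j)"
proof -
  have inj: "inj_on (rank B) S"
    using inj_on_subset[OF inj_on_rank] assms(1,2) .
  moreover have "card (rank B ` S) \<le> card J"
    using assms(3,4) by (rule card_mono[rotated])
  ultimately have "rank B ` S = J"
    using assms(3-5) by (intro card_subset_eq) (auto simp: card_image)
  with inj show ?thesis
    using sum.reindex[of "rank B" S f] by simp
qed

lemma sum_rank_below:
  "finite B \<Longrightarrow> (\<Sum>y\<in>{y\<in>B. y < x}. f (rank B y)) = (\<Sum>j<rank B x. f j)"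
  by (rule sum_rank_reindex) (auto simp: rank_strict_mono, simp add: rank_def)

lemma sum_rank_above:
  assumes "finite B" "x \<notin> B"
  shows "(\<Sum>y\<in>{y\<in>B. x < y}. f (rank B y)) = (\<Sum>j\<in>{rank B x..<card B}. f j)"
proof (rule sum_rank_reindex)
  have "{y\<in>B. y < x} \<union> {y\<in>B. x < y} = B"
    using assms(2) nat_neq_iff by auto
  moreover have "{y\<in>B. y < x} \<inter> {y\<in>B. x < y} = {}"
    by auto
  ultimately have "card B = rank B x + card {y\<in>B. x < y}"
    using assms(1) card_Un_disjoint[of "{y\<in>B. y < x}" "{y\<in>B. x < y}"] by (simp add: rank_def)
  then show "card {rank B x..<card B} \<le> card {y\<in>B. x < y}"
    by simp
qed (use assms in \<open>auto simp: rank_mono rank_less_card\<close>)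

lemma sum_rank: "finite B \<Longrightarrow> (\<Sum>y\<in>B. f (rank B y)) = (\<Sum>j<card B. f j)"
  by (rule sum_rank_reindex) (auto simp: rank_less_card)

lemma entringer_Suc_sum_below:
  assumes "finite B" "card B = Suc n"
  shows "(\<Sum>y\<in>{y\<in>B. y < x}. entringer n (n - rank B y)) = entringer (Suc n) (rank B x)"
proof -
  have "rank B x \<le> Suc n"
    using assms card_mono[of B "{y\<in>B. y < x}"] by (simp add: rank_def)
  then show ?thesis
    using sum_rank_below[OF assms(1), where f = "\<lambda>j. entringer n (n - j)" and x = x]
    by (simp add: entringer_Suc_eq_sum)
qed

lemma entringer_Suc_sum_above:
  assumes "finite B" "card B = Suc n" "x \<notin> B"
  shows "(\<Sum>y\<in>{y\<in>B. x < y}. entringer n (rank B y)) = entringer (Suc n) (Suc n - rank B x)"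
proof -
  have "(\<Sum>y\<in>{y\<in>B. x < y}. entringer n (rank B y)) = (\<Sum>j\<in>{rank B x..<Suc n}. entringer n j)"
    using sum_rank_above[OF assms(1,3), where f = "entringer n"] assms(2) by simp
  also have "\<dots> = (\<Sum>t<Suc n - rank B x. entringer n (n - t))"
    by (rule sum.reindex_bij_witness[of _ "\<lambda>t. n - t" "\<lambda>j. n - j"]) auto
  also have "\<dots> = entringer (Suc n) (Suc n - rank B x)"
    by (simp add: entringer_Suc_eq_sum)
  finally show ?thesis .
qed

lemma card_alt_perms:
  assumes "finite A" "card A = Suc n" "x \<in> A"
  shows "card (alt_perms down A x) = entringer n (if down then rank A x else n - rank A x)"
  using assms
proof (induction n arbitrary: A x down)
  case 0
  then have "A = {x}"
    by (auto simp: card_Suc_eq)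
  moreover have "rank {x} x = 0"
    by (simp add: rank_def)
  ultimately show ?case
    by (simp add: alt_perms_singleton)
next
  case (Suc n)
  define B where "B = A - {x}"
  have B: "finite B" "card B = Suc n" "x \<notin> B" "A \<noteq> {x}"
    using Suc.prems by (auto simp: B_def)
  have IH: "card (alt_perms (\<not> down) B y) = entringer n (if down then n - rank B y else rank B y)"
    if "y \<in> B" for y
    using Suc.IH[of B y "\<not> down"] B that by simp
  have "card (alt_perms down A x) =
      (\<Sum>y\<in>{y\<in>B. if down then y < x else x < y}. card (alt_perms (\<not> down) B y))"
    using Suc.prems B by (simp add: card_alt_perms_Cons B_def)
  also have "\<dots> = (\<Sum>y\<in>{y\<in>B. if down then y < x else x < y}.
      entringer n (if down then n - rank B y else rank B y))"
    using IH by (intro sum.cong) auto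
  also have "\<dots> = entringer (Suc n) (if down then rank B x else Suc n - rank B x)"
    using B by (cases down) (simp_all add: entringer_Suc_sum_below entringer_Suc_sum_above)
  finally show ?case
    by (simp add: B_def rank_remove)
qed

lemma card_down_up_perms:
  assumes "finite A"
  shows "card {xs. distinct xs \<and> set xs = A \<and> down_up xs} = entringer (card A) (card A)"
proof (cases "A = {}")
  case True
  then have "{xs. distinct xs \<and> set xs = A \<and> down_up xs} = {[]}"
    by (auto simp: down_up_def)
  with True show ?thesis
    by simp
next
  case False
  then obtain n where n: "card A = Suc n"
    using assms by (cases "card A") auto
  have perms_eq: "{xs. distinct xs \<and> set xs = A \<and> down_up xs} = (\<Union>x\<in>A. alt_perms True A x)"
    using False by (auto simp: alt_perms_def down_up_eq_alternating intro!: hd_in_set)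
  have "card {xs. distinct xs \<and> set xs = A \<and> down_up xs} = (\<Sum>x\<in>A. card (alt_perms True A x))"
    unfolding perms_eq using assms finite_alt_perms by (intro card_UN_disjoint) (auto simp: alt_perms_def)
  also have "\<dots> = (\<Sum>x\<in>A. entringer n (rank A x))"
    using assms n by (simp add: card_alt_perms)
  also have "\<dots> = (\<Sum>j<Suc n. entringer n j)"
    unfolding n[symmetric] by (rule sum_rank[OF assms])
  also have "\<dots> = (\<Sum>j<Suc n. entringer n (n - j))"
    by (rule sum.reindex_bij_witness[of _ "\<lambda>j. n - j" "\<lambda>j. n - j"]) auto
  also have "\<dots> = entringer (card A) (card A)"
    using n by (simp add: entringer_Suc_eq_sum)
  finally show ?thesis .
qed

lemma euler_E_eq_entringer: "euler_E m = entringer m m"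
  using card_down_up_perms[of "{1..m}"] by (simp add: euler_E_def)

theorem proposition2:
  fixes n k :: nat
  assumes "k \<le> n"
  shows "npaths n n k = (n choose k) * euler_E (n - k)"
proof -
  have "npaths n n k = npaths_rec n n k"
    by (simp add: npaths_eq_npaths_rec)
  also have "\<dots> = (n choose k) * entringer (n - k) (n - k)"
    using assms by (rule npaths_rec_diagonal)
  also have "\<dots> = (n choose k) * euler_E (n - k)"
    by (simp add: euler_E_eq_entringer)
  finally show ?thesis .
qed

end
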